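(* Let $n\geq 2$ and let $\mu_0^n$ be the complex commutative associative algebra with basis $\{e_1,\dots,e_n\}$ and multiplication $e_i\cdot e_j=e_{i+j}$ if $2\leq i+j\leq n$, all other products of basis elements being zero. Let $[-,-]$ be a bilinear operation on $\mu_0^n$ such that $(\mu_0^n,\cdot,[-,-])$ is a transposed Poisson algebra. Then there exist $\alpha_2,\dots,\alpha_n\in\mathbb{C}$ such that \[ [e_i,e_j]=(j-i)\sum_{t=i+j-1}^{n}\alpha_{t-i-j+3}\,e_t\quad\text{for } 3\leq i+j\leq n+1, \] and all other brackets of basis elements are zero. (This algebra is denoted $\mathbf{TP}(\alpha_2,\dots,\alpha_n)$.)
   Context: A transposed Poisson algebra is a triple $(\mathfrak{L},\cdot,[-,-])$ where $\mathfrak{L}$ is a complex vector space, $(\mathfrak{L},\cdot)$ is a commutative associative algebra, $(\mathfrak{L},[-,-])$ is a Lie algebra, and $2z\cdot[x,y]=[z\cdot x,y]+[x,z\cdot y]$ for all $x,y,z\in\mathfrak{L}$. *)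

theory Defs
  imports Main "HOL.Complex"
begin

text \<open>Elements of mu_0^n are coordinate vectors v :: nat => complex supported on {1..n};
  the basis vector e_i is the indicator of i.\<close>

definition mu0_carrier :: "nat \<Rightarrow> (nat \<Rightarrow> complex) set" where
  "mu0_carrier n = {v. \<forall>k. v k \<noteq> 0 \<longrightarrow> k \<in> {1..n}}"

definition ebasis :: "nat \<Rightarrow> nat \<Rightarrow> complex" where
  "ebasis i = (\<lambda>k. if k = i then 1 else 0)"

definition vadd :: "(nat \<Rightarrow> complex) \<Rightarrow> (nat \<Rightarrow> complex) \<Rightarrow> nat \<Rightarrow> complex" where
  "vadd x y = (\<lambda>k. x k + y k)"

definition vsmult :: "complex \<Rightarrow> (nat \<Rightarrow> complex) \<Rightarrow> nat \<Rightarrow> complex" where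
  "vsmult a x = (\<lambda>k. a * x k)"

definition vzero :: "nat \<Rightarrow> complex" where
  "vzero = (\<lambda>k. 0)"

text \<open>Multiplication of mu_0^n: e_i e_j = e_{i+j} if i+j <= n, else 0, extended bilinearly.\<close>
definition mu0_mult :: "nat \<Rightarrow> (nat \<Rightarrow> complex) \<Rightarrow> (nat \<Rightarrow> complex) \<Rightarrow> nat \<Rightarrow> complex" where
  "mu0_mult n x y = (\<lambda>t. if t \<in> {1..n} then (\<Sum>i=1..t-1. x i * y (t - i)) else 0)"

definition bilinear_on :: "(nat \<Rightarrow> complex) set \<Rightarrow>
    ((nat \<Rightarrow> complex) \<Rightarrow> (nat \<Rightarrow> complex) \<Rightarrow> nat \<Rightarrow> complex) \<Rightarrow> bool" where
  "bilinear_on V b \<longleftrightarrow>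
     (\<forall>x\<in>V. \<forall>y\<in>V. b x y \<in> V) \<and>
     (\<forall>a c x y z. x \<in> V \<longrightarrow> y \<in> V \<longrightarrow> z \<in> V \<longrightarrow>
        b (vadd (vsmult a x) (vsmult c y)) z = vadd (vsmult a (b x z)) (vsmult c (b y z)) \<and>
        b z (vadd (vsmult a x) (vsmult c y)) = vadd (vsmult a (b z x)) (vsmult c (b z y)))"

definition lie_on :: "(nat \<Rightarrow> complex) set \<Rightarrow>
    ((nat \<Rightarrow> complex) \<Rightarrow> (nat \<Rightarrow> complex) \<Rightarrow> nat \<Rightarrow> complex) \<Rightarrow> bool" where
  "lie_on V b \<longleftrightarrow> bilinear_on V b \<and>
     (\<forall>x\<in>V. b x x = vzero) \<and>
     (\<forall>x\<in>V. \<forall>y\<in>V. \<forall>z\<in>V.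
        vadd (vadd (b x (b y z)) (b y (b z x))) (b z (b x y)) = vzero)"

definition comm_assoc_on :: "(nat \<Rightarrow> complex) set \<Rightarrow>
    ((nat \<Rightarrow> complex) \<Rightarrow> (nat \<Rightarrow> complex) \<Rightarrow> nat \<Rightarrow> complex) \<Rightarrow> bool" where
  "comm_assoc_on V m \<longleftrightarrow> bilinear_on V m \<and>
     (\<forall>x\<in>V. \<forall>y\<in>V. m x y = m y x) \<and>
     (\<forall>x\<in>V. \<forall>y\<in>V. \<forall>z\<in>V. m (m x y) z = m x (m y z))"

definition transposed_poisson_on :: "(nat \<Rightarrow> complex) set \<Rightarrow>
    ((nat \<Rightarrow> complex) \<Rightarrow> (nat \<Rightarrow> complex) \<Rightarrow> nat \<Rightarrow> complex) \<Rightarrow>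
    ((nat \<Rightarrow> complex) \<Rightarrow> (nat \<Rightarrow> complex) \<Rightarrow> nat \<Rightarrow> complex) \<Rightarrow> bool" where
  "transposed_poisson_on V m b \<longleftrightarrow> comm_assoc_on V m \<and> lie_on V b \<and>
     (\<forall>x\<in>V. \<forall>y\<in>V. \<forall>z\<in>V.
        vsmult 2 (m z (b x y)) = vadd (b (m z x) y) (b x (m z y)))"

end

theory Submission
  imports Defs
begin

text \<open>Write \<open>c i j\<close> for the coordinate vector of \<open>[e\<^sub>i, e\<^sub>j]\<close>, extended by zero to indices
  beyond \<open>n\<close>. Multiplication by \<open>e\<^sub>k\<close> shifts coordinates by \<open>k\<close>, so the transposed Poisson
  identity with \<open>z = e\<^sub>k\<close> reads \<open>2 e\<^sub>k c i j = c (i+k) j + c i (j+k)\<close>. For \<open>k = 1\<close> this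
  expresses row \<open>i+1\<close> through row \<open>i\<close>; combining \<open>k = 1\<close> and \<open>k = 2\<close> expresses column \<open>j+2\<close>
  through columns \<open>j+1\<close> and \<open>j\<close>. Hence every \<open>c i j\<close> is determined by \<open>c 1 1 = 0\<close> and
  \<open>c 1 2\<close>, and the brackets of \<open>TP(\<alpha>)\<close> with \<open>\<alpha> = c 1 2\<close> obey the same identity.
  Finally \<open>c 1 (n+1) = 0\<close> forces \<open>\<alpha> 1 = 0\<close>, which is why the sums start at \<open>e\<^sub>i\<^sub>+\<^sub>j\<^sub>-\<^sub>1\<close>.\<close>

definition mu0_shift :: "nat \<Rightarrow> nat \<Rightarrow> (nat \<Rightarrow> complex) \<Rightarrow> nat \<Rightarrow> complex" where
  "mu0_shift n k w = (\<lambda>t. if k < t \<and> t \<le> n then w (t - k) else 0)"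

lemma mu0_mult_ebasis_left:
  assumes "1 \<le> k"
  shows "mu0_mult n (ebasis k) w = mu0_shift n k w"
proof
  fix t
  have "(\<Sum>i=1..t-1. ebasis k i * w (t - i)) = (\<Sum>i=1..t-1. if i = k then w (t - k) else 0)"
    by (rule sum.cong) (auto simp: ebasis_def)
  then show "mu0_mult n (ebasis k) w t = mu0_shift n k w t"
    using assms by (auto simp: mu0_mult_def mu0_shift_def)
qed

lemma mu0_mult_ebasis_ebasis:
  assumes "1 \<le> k" "1 \<le> i"
  shows "mu0_mult n (ebasis k) (ebasis i) = (if i + k \<le> n then ebasis (i + k) else vzero)"
  unfolding mu0_mult_ebasis_left[OF assms(1)]
  using assms by (auto simp: mu0_shift_def ebasis_def vzero_def fun_eq_iff)

lemma mu0_shift_shift: "mu0_shift n k (mu0_shift n l w) = mu0_shift n (k + l) w"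
  by (auto simp: mu0_shift_def fun_eq_iff diff_diff_add)

lemma mu0_shift_scale: "mu0_shift n k (\<lambda>t. a * w t) = (\<lambda>t. a * mu0_shift n k w t)"
  by (simp add: mu0_shift_def fun_eq_iff)

lemma mu0_shift_add: "mu0_shift n k (\<lambda>t. v t + w t) = (\<lambda>t. mu0_shift n k v t + mu0_shift n k w t)"
  by (simp add: mu0_shift_def fun_eq_iff)

lemma sum_ebasis:
  assumes "finite A"
  shows "(\<Sum>s\<in>A. f s * ebasis s t) = (if t \<in> A then f t else 0)"
proof -
  have "(\<Sum>s\<in>A. f s * ebasis s t) = (\<Sum>s\<in>A. if s = t then f t else 0)"
    by (rule sum.cong) (auto simp: ebasis_def)
  then show ?thesis
    using assms by simp
qed

definition shift_law :: "nat \<Rightarrow> (nat \<Rightarrow> nat \<Rightarrow> nat \<Rightarrow> complex) \<Rightarrow> bool" where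
  "shift_law n c \<longleftrightarrow> (\<forall>i j k t. 1 \<le> i \<longrightarrow> 1 \<le> j \<longrightarrow> 1 \<le> k \<longrightarrow>
     2 * mu0_shift n k (c i j) t = c (i + k) j t + c i (j + k) t)"

lemma shift_law_row_step:
  assumes "shift_law n c" "1 \<le> i" "1 \<le> j"
  shows "c (Suc i) j = (\<lambda>t. 2 * mu0_shift n 1 (c i j) t - c i (Suc j) t)"
  using assms unfolding shift_law_def by (force simp: algebra_simps)

lemma shift_law_column_step:
  assumes law: "shift_law n c" and "1 \<le> i" "1 \<le> j"
  shows "c i (Suc (Suc j)) = (\<lambda>t. 2 * mu0_shift n 1 (c i (Suc j)) t - mu0_shift n 2 (c i j) t)"
proof
  fix t
  have e1: "2 * mu0_shift n 2 (c i j) t = c (Suc (Suc i)) j t + c i (Suc (Suc j)) t"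
    and e2: "2 * mu0_shift n 1 (c (Suc i) j) t = c (Suc (Suc i)) j t + c (Suc i) (Suc j) t"
    and e3: "2 * mu0_shift n 1 (c i (Suc j)) t = c (Suc i) (Suc j) t + c i (Suc (Suc j)) t"
    using law assms unfolding shift_law_def by (auto simp: numeral_2_eq_2)
  have "(\<lambda>t. 2 * mu0_shift n 1 (c i j) t) = (\<lambda>t. c (Suc i) j t + c i (Suc j) t)"
    using law assms unfolding shift_law_def by auto
  then have "mu0_shift n 1 (\<lambda>t. 2 * mu0_shift n 1 (c i j) t) t
      = mu0_shift n 1 (\<lambda>t. c (Suc i) j t + c i (Suc j) t) t"
    by simp
  then have e4:
      "2 * mu0_shift n 2 (c i j) t = mu0_shift n 1 (c (Suc i) j) t + mu0_shift n 1 (c i (Suc j)) t"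
    by (simp add: mu0_shift_scale mu0_shift_add mu0_shift_shift numeral_2_eq_2)
  show "c i (Suc (Suc j)) t = 2 * mu0_shift n 1 (c i (Suc j)) t - mu0_shift n 2 (c i j) t"
    using e1 e2 e3 e4 by algebra
qed

lemma shift_law_unique:
  assumes c: "shift_law n c" and d: "shift_law n d"
    and "c 1 1 = d 1 1" "c 1 2 = d 1 2" "1 \<le> i" "1 \<le> j"
  shows "c i j = d i j"
proof -
  have first_row: "c 1 j = d 1 j \<and> c 1 (Suc j) = d 1 (Suc j)" if "1 \<le> j" for j
    using that
  proof (induction j rule: dec_induct)
    case base
    then show ?case
      using assms(3,4) by (simp add: numeral_2_eq_2)
  next
    case (step j)
    then show ?case
      using shift_law_column_step[OF c, of 1 j] shift_law_column_step[OF d, of 1 j] by simp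
  qed
  have "\<forall>j\<ge>1. c i j = d i j"
    using \<open>1 \<le> i\<close>
  proof (induction i rule: dec_induct)
    case base
    then show ?case
      using first_row by blast
  next
    case (step i)
    show ?case
    proof (intro allI impI)
      fix j :: nat
      assume "1 \<le> j"
      then show "c (Suc i) j = d (Suc i) j"
        using step shift_law_row_step[OF c step.hyps(1)] shift_law_row_step[OF d step.hyps(1)]
        by simp
    qed
  qed
  then show ?thesis
    using \<open>1 \<le> j\<close> by blast
qed

text \<open>The \<open>t\<close>-th coordinate of \<open>[e\<^sub>i, e\<^sub>j]\<close> in \<open>TP(\<alpha>)\<close>, including a term \<open>\<alpha> 1 e\<^sub>i\<^sub>+\<^sub>j\<^sub>-\<^sub>2\<close>
  that is only shown to vanish at the end.\<close>
definition tp_coeff :: "nat \<Rightarrow> (nat \<Rightarrow> complex) \<Rightarrow> nat \<Rightarrow> nat \<Rightarrow> nat \<Rightarrow> complex" where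
  "tp_coeff n \<alpha> i j t =
     (if i + j < t + 3 \<and> t \<le> n then of_int (int j - int i) * \<alpha> (t + 3 - (i + j)) else 0)"

lemma shift_law_tp_coeff: "shift_law n (tp_coeff n \<alpha>)"
  unfolding shift_law_def
proof (intro allI impI)
  fix i j k t :: nat
  assume "1 \<le> i" "1 \<le> j" "1 \<le> k"
  show "2 * mu0_shift n k (tp_coeff n \<alpha> i j) t
      = tp_coeff n \<alpha> (i + k) j t + tp_coeff n \<alpha> i (j + k) t"
  proof (cases "k < t \<and> t \<le> n")
    case True
    then have index: "t - k + 3 - (i + j) = t + 3 - (i + k + j)"
        "t + 3 - (i + (j + k)) = t + 3 - (i + k + j)"
      and range: "i + j < t - k + 3 \<longleftrightarrow> i + k + j < t + 3"
      and "t - k \<le> n"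
      by auto
    have "of_int (int j - int (i + k)) + of_int (int (j + k) - int i)
        = (2 * of_int (int j - int i) :: complex)"
      by simp
    with True \<open>t - k \<le> n\<close> show ?thesis
      unfolding mu0_shift_def tp_coeff_def index range
      by (simp add: add.commute add.left_commute flip: distrib_right)
  next
    case False
    have "tp_coeff n \<alpha> (i + k) j t + tp_coeff n \<alpha> i (j + k) t = 0"
    proof (cases "i + j + k < t + 3 \<and> t \<le> n")
      case True
      with False \<open>1 \<le> i\<close> \<open>1 \<le> j\<close> have "i = 1" "j = 1"
        by auto
      then show ?thesis
        by (simp add: tp_coeff_def add.commute)
    next
      case False
      then show ?thesis
        by (auto simp: tp_coeff_def add.commute add.left_commute)
    qed
    with False show ?thesis
      by (auto simp: mu0_shift_def)
  qed
qed

lemma tp_coeff_diag: "tp_coeff n \<alpha> i i = vzero"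
  by (simp add: tp_coeff_def vzero_def fun_eq_iff)

lemma tp_coeff_1_2:
  assumes "\<alpha> \<in> mu0_carrier n"
  shows "tp_coeff n \<alpha> 1 2 = \<alpha>"
  using assms by (auto simp: tp_coeff_def mu0_carrier_def fun_eq_iff)

lemma tp_coeff_eq_sum:
  assumes "\<alpha> 1 = 0" "i \<in> {1..n}" "j \<in> {1..n}"
  shows "tp_coeff n \<alpha> i j =
    (if 3 \<le> i + j \<and> i + j \<le> n + 1
     then (\<lambda>t. \<Sum>s\<in>{i+j-1..n}. (of_int (int j - int i) * \<alpha> (s + 3 - (i + j))) * ebasis s t)
     else vzero)"
proof
  fix t
  have "t + 3 - (i + j) = 1 \<longleftrightarrow> t + 2 = i + j" if "i + j < t + 3"
    using that by auto
  then show "tp_coeff n \<alpha> i j t = (if 3 \<le> i + j \<and> i + j \<le> n + 1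
     then (\<lambda>t. \<Sum>s\<in>{i+j-1..n}. (of_int (int j - int i) * \<alpha> (s + 3 - (i + j))) * ebasis s t)
     else vzero) t"
    using assms by (auto simp: sum_ebasis tp_coeff_def vzero_def)
qed

lemma bilinear_on_vzero_left:
  assumes "bilinear_on V b" "z \<in> V"
  shows "b vzero z = vzero"
proof -
  have "b (vadd (vsmult 0 z) (vsmult 0 z)) z = vadd (vsmult 0 (b z z)) (vsmult 0 (b z z))"
    using assms unfolding bilinear_on_def by blast
  then show ?thesis
    by (simp add: vadd_def vsmult_def vzero_def)
qed

lemma bilinear_on_vzero_right:
  assumes "bilinear_on V b" "z \<in> V"
  shows "b z vzero = vzero"
proof -
  have "b z (vadd (vsmult 0 z) (vsmult 0 z)) = vadd (vsmult 0 (b z z)) (vsmult 0 (b z z))"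
    using assms unfolding bilinear_on_def by blast
  then show ?thesis
    by (simp add: vadd_def vsmult_def vzero_def)
qed

lemma ebasis_in_mu0_carrier: "i \<in> {1..n} \<Longrightarrow> ebasis i \<in> mu0_carrier n"
  by (auto simp: mu0_carrier_def ebasis_def)

text \<open>Brackets of basis vectors are extended by zero to indices beyond \<open>n\<close>; this matches
  \<open>e\<^sub>k e\<^sub>i = 0\<close> for \<open>i + k > n\<close>, so the shift law holds without range conditions.\<close>
definition bracket_coeff ::
    "nat \<Rightarrow> ((nat \<Rightarrow> complex) \<Rightarrow> (nat \<Rightarrow> complex) \<Rightarrow> nat \<Rightarrow> complex) \<Rightarrow>
     nat \<Rightarrow> nat \<Rightarrow> nat \<Rightarrow> complex"
  where "bracket_coeff n br i j =
    (if i \<in> {1..n} \<and> j \<in> {1..n} then br (ebasis i) (ebasis j) else vzero)"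

lemma bracket_coeff_in_mu0_carrier:
  assumes "bilinear_on (mu0_carrier n) br"
  shows "bracket_coeff n br i j \<in> mu0_carrier n"
proof -
  have "br (ebasis i) (ebasis j) \<in> mu0_carrier n" if "i \<in> {1..n}" "j \<in> {1..n}"
    using assms that ebasis_in_mu0_carrier unfolding bilinear_on_def by blast
  moreover have "vzero \<in> mu0_carrier n"
    by (simp add: mu0_carrier_def vzero_def)
  ultimately show ?thesis
    by (simp add: bracket_coeff_def)
qed

lemma bracket_coeff_diag:
  assumes "transposed_poisson_on (mu0_carrier n) (mu0_mult n) br"
  shows "bracket_coeff n br i i = vzero"
proof -
  have "br (ebasis i) (ebasis i) = vzero" if "i \<in> {1..n}"
    using assms that ebasis_in_mu0_carrier unfolding transposed_poisson_on_def lie_on_def by blast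
  then show ?thesis
    by (simp add: bracket_coeff_def)
qed

lemma shift_law_bracket_coeff:
  assumes "transposed_poisson_on (mu0_carrier n) (mu0_mult n) br"
  shows "shift_law n (bracket_coeff n br)"
  unfolding shift_law_def
proof (intro allI impI)
  fix i j k t :: nat
  assume "1 \<le> i" "1 \<le> j" "1 \<le> k"
  show "2 * mu0_shift n k (bracket_coeff n br i j) t
      = bracket_coeff n br (i + k) j t + bracket_coeff n br i (j + k) t"
  proof (cases "i \<le> n \<and> j \<le> n \<and> k \<le> n")
    case True
    then have basis:
        "ebasis i \<in> mu0_carrier n" "ebasis j \<in> mu0_carrier n" "ebasis k \<in> mu0_carrier n"
      using \<open>1 \<le> i\<close> \<open>1 \<le> j\<close> \<open>1 \<le> k\<close> by (auto intro: ebasis_in_mu0_carrier)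
    have bil: "bilinear_on (mu0_carrier n) br"
      using assms by (simp add: transposed_poisson_on_def lie_on_def)
    have "vsmult 2 (mu0_mult n (ebasis k) (br (ebasis i) (ebasis j)))
        = vadd (br (mu0_mult n (ebasis k) (ebasis i)) (ebasis j))
               (br (ebasis i) (mu0_mult n (ebasis k) (ebasis j)))"
      using assms basis unfolding transposed_poisson_on_def by blast
    moreover have "br (mu0_mult n (ebasis k) (ebasis i)) (ebasis j) = bracket_coeff n br (i + k) j"
      using True \<open>1 \<le> i\<close> \<open>1 \<le> j\<close> \<open>1 \<le> k\<close> bilinear_on_vzero_left[OF bil basis(2)]
      by (simp add: mu0_mult_ebasis_ebasis bracket_coeff_def)
    moreover have "br (ebasis i) (mu0_mult n (ebasis k) (ebasis j)) = bracket_coeff n br i (j + k)"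
      using True \<open>1 \<le> i\<close> \<open>1 \<le> j\<close> \<open>1 \<le> k\<close> bilinear_on_vzero_right[OF bil basis(1)]
      by (simp add: mu0_mult_ebasis_ebasis bracket_coeff_def)
    moreover have "br (ebasis i) (ebasis j) = bracket_coeff n br i j"
      using True \<open>1 \<le> i\<close> \<open>1 \<le> j\<close> by (simp add: bracket_coeff_def)
    ultimately show ?thesis
      using \<open>1 \<le> k\<close> by (simp add: mu0_mult_ebasis_left vsmult_def vadd_def fun_eq_iff)
  next
    case False
    then show ?thesis
      by (auto simp: bracket_coeff_def mu0_shift_def vzero_def)
  qed
qed

theorem mainTheorem1:
  fixes n :: nat
    and br :: "(nat \<Rightarrow> complex) \<Rightarrow> (nat \<Rightarrow> complex) \<Rightarrow> nat \<Rightarrow> complex"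
  assumes "n \<ge> 2"
    and "bilinear_on (mu0_carrier n) br"
    and "transposed_poisson_on (mu0_carrier n) (mu0_mult n) br"
  shows "\<exists>\<alpha> :: nat \<Rightarrow> complex. \<forall>i\<in>{1..n}. \<forall>j\<in>{1..n}.
           br (ebasis i) (ebasis j) =
             (if 3 \<le> i + j \<and> i + j \<le> n + 1
              then (\<lambda>t. \<Sum>s\<in>{i+j-1..n}. (of_int (int j - int i) * \<alpha> (s + 3 - (i + j))) * ebasis s t)
              else vzero)"
proof -
  define \<alpha> where "\<alpha> = bracket_coeff n br 1 2"
  have bracket: "bracket_coeff n br i j = tp_coeff n \<alpha> i j" if "1 \<le> i" "1 \<le> j" for i j
  proof (rule shift_law_unique[OF shift_law_bracket_coeff[OF assms(3)] shift_law_tp_coeff _ _ that])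
    show "bracket_coeff n br 1 1 = tp_coeff n \<alpha> 1 1"
      using assms(3) by (simp add: bracket_coeff_diag tp_coeff_diag)
    show "bracket_coeff n br 1 2 = tp_coeff n \<alpha> 1 2"
      unfolding \<alpha>_def
      by (rule tp_coeff_1_2[OF bracket_coeff_in_mu0_carrier[OF assms(2)], symmetric])
  qed
  have "of_nat n * \<alpha> 1 = tp_coeff n \<alpha> 1 (n + 1) n"
    using assms(1) by (simp add: tp_coeff_def)
  also have "\<dots> = bracket_coeff n br 1 (n + 1) n"
    by (simp add: bracket)
  also have "\<dots> = 0"
    by (simp add: bracket_coeff_def vzero_def)
  finally have "\<alpha> 1 = 0"
    using assms(1) by simp
  moreover have "br (ebasis i) (ebasis j) = tp_coeff n \<alpha> i j" if "i \<in> {1..n}" "j \<in> {1..n}" for i j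
    using bracket[of i j] that by (simp add: bracket_coeff_def)
  ultimately show ?thesis
    by (intro exI[of _ \<alpha>]) (simp add: tp_coeff_eq_sum)
qed

end
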